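(* Let $(\rho,\sigma)\in\mathfrak V$ with $\sigma\le0$ and $P,F\in W^{(l)}\setminus\{0\}$. Assume $F$ is $(\rho,\sigma)$-homogeneous and $[P,F]_{\rho,\sigma}=\ell_{\rho,\sigma}(P)$. Then $f^{(l)}_{F,\rho,\sigma}$ is separable and every irreducible factor of $f^{(l)}_{P,\rho,\sigma}$ divides $f^{(l)}_{F,\rho,\sigma}$.
   Context: $K$ is a field of characteristic zero, $l\in\mathbb{N}$. $W^{(l)}$ is the associative $K$-algebra with $K$-basis $\{X^{i/l}Y^j:i\in\mathbb{Z},j\in\mathbb{N}_0\}$, powers of $X$ multiplying as Laurent monomials and $[Y,X^\alpha]=\alpha X^{\alpha-1}$ for $\alpha\in\frac1l\mathbb{Z}$. $L^{(l)}=K[x^{\pm1/l},y]$, $\Psi^{(l)}(X^{i/l}Y^j)=x^{i/l}y^j$ ($K$-linear); supports are sets of exponents with nonzero coefficient. $\mathfrak V=\{(\rho,\sigma)\in\mathbb{Z}^2:\gcd(\rho,\sigma)=1,\rho+\sigma>0\}$. For $P\ne0$, $v_{\rho,\sigma}(P)=\max\{\rho a+\sigma b:(a,b)\in\mathrm{Supp}(P)\}$, $\ell_{\rho,\sigma}(P)$ = sum of terms of $\Psi^{(l)}(P)$ attaining it; $F$ is $(\rho,\sigma)$-homogeneous if $\Psi^{(l)}(F)=\ell_{\rho,\sigma}(F)$. $[P,Q]_{\rho,\sigma}:=0$ if $[P,Q]=0$ or $v_{\rho,\sigma}([P,Q])<v_{\rho,\sigma}(P)+v_{\rho,\sigma}(Q)-(\rho+\sigma)$,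 else $\ell_{\rho,\sigma}([P,Q])$. For $\sigma\le0$ and $P\ne0$, write $\ell_{\rho,\sigma}(P)=\sum_{i=0}^\gamma a_ix^{\frac rl-\frac{i\sigma}\rho}y^{s+i}$ with $a_0\ne0\ne a_\gamma$, and $f^{(l)}_{P,\rho,\sigma}:=\sum_{i=0}^\gamma a_ix^i\in K[x]$. *)

theory Defs
  imports "HOL-Computational_Algebra.Polynomial" "HOL-Computational_Algebra.Polynomial_Factorial"
begin

text \<open>Elements of W^(l) are represented by their coefficient functions:
  P (i,j) is the coefficient of the basis element X^(i/l) Y^j. The same coefficient
  functions represent elements of L^(l) = K[x^(1/l), x^(-1/l), y] (coefficient of x^(i/l) y^j),
  so the K-linear map Psi^(l) is the identity on coefficient functions.\<close>

type_synonym 'a wel = "int \<times> nat \<Rightarrow> 'a"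

definition wsupp :: "'a::zero wel \<Rightarrow> (int \<times> nat) set" where
  "wsupp P = {e. P e \<noteq> 0}"

definition welem :: "'a::zero wel \<Rightarrow> bool" where
  "welem P \<longleftrightarrow> finite (wsupp P)"

definition falling :: "'a::field \<Rightarrow> nat \<Rightarrow> 'a" where
  "falling \<alpha> m = (\<Prod>t<m. \<alpha> - of_nat t)"

text \<open>Product in W^(l): (X^(a/l) Y^j)(X^(b/l) Y^k)
   = sum_m binom(j,m) (b/l)_m X^((a+b-m l)/l) Y^(j+k-m),
  which follows from [Y, X^alpha] = alpha X^(alpha-1).\<close>
definition wmult :: "nat \<Rightarrow> 'a::field_char_0 wel \<Rightarrow> 'a wel \<Rightarrow> 'a wel" where
  "wmult l P Q = (\<lambda>(c,d). \<Sum>(a,j)\<in>wsupp P. \<Sum>(b,k)\<in>wsupp Q. \<Sum>m\<le>j.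
      (if a + b - int m * int l = c \<and> j + k - m = d
       then P (a,j) * Q (b,k) * of_nat (j choose m) * falling (of_int b / of_nat l) m
       else 0))"

definition wcomm :: "nat \<Rightarrow> 'a::field_char_0 wel \<Rightarrow> 'a wel \<Rightarrow> 'a wel" where
  "wcomm l P Q = (\<lambda>e. wmult l P Q e - wmult l Q P e)"

definition Vdir :: "(int \<times> int) set" where
  "Vdir = {(\<rho>,\<sigma>). gcd \<rho> \<sigma> = 1 \<and> \<rho> + \<sigma> > 0}"

definition wt :: "nat \<Rightarrow> int \<Rightarrow> int \<Rightarrow> int \<times> nat \<Rightarrow> rat" where
  "wt l \<rho> \<sigma> e = of_int \<rho> * (of_int (fst e) / of_nat l) + of_int \<sigma> * of_nat (snd e)"

definition vval :: "nat \<Rightarrow> int \<Rightarrow> int \<Rightarrow> 'a::zero wel \<Rightarrow> rat" where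
  "vval l \<rho> \<sigma> P = Max (wt l \<rho> \<sigma> ` wsupp P)"

definition lead :: "nat \<Rightarrow> int \<Rightarrow> int \<Rightarrow> 'a::zero wel \<Rightarrow> 'a wel" where
  "lead l \<rho> \<sigma> P = (\<lambda>e. if e \<in> wsupp P \<and> wt l \<rho> \<sigma> e = vval l \<rho> \<sigma> P then P e else 0)"

definition homogeneous :: "nat \<Rightarrow> int \<Rightarrow> int \<Rightarrow> 'a::zero wel \<Rightarrow> bool" where
  "homogeneous l \<rho> \<sigma> F \<longleftrightarrow> lead l \<rho> \<sigma> F = F"

definition comm_rs :: "nat \<Rightarrow> int \<Rightarrow> int \<Rightarrow> 'a::field_char_0 wel \<Rightarrow> 'a wel \<Rightarrow> 'a wel" where
  "comm_rs l \<rho> \<sigma> P Q =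
     (if wcomm l P Q = (\<lambda>_. 0) \<or>
         vval l \<rho> \<sigma> (wcomm l P Q) < vval l \<rho> \<sigma> P + vval l \<rho> \<sigma> Q - of_int (\<rho> + \<sigma>)
      then (\<lambda>_. 0) else lead l \<rho> \<sigma> (wcomm l P Q))"

text \<open>f^(l)_{P,rho,sigma}: writing lead(P) = sum_i a_i x^(r/l - i sigma/rho) y^(s+i),
  with s the least y-degree occurring, f = sum_i a_i x^i; i.e. each term of lead(P)
  of y-degree j contributes a_i x^(j-s).\<close>
definition fpol :: "nat \<Rightarrow> int \<Rightarrow> int \<Rightarrow> 'a::field_char_0 wel \<Rightarrow> 'a poly" where
  "fpol l \<rho> \<sigma> P =
     (let L = lead l \<rho> \<sigma> P; s = Min (snd ` wsupp L)
      in \<Sum>e\<in>wsupp L. monom (L e) (snd e - s))"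

definition separable :: "'a::field poly \<Rightarrow> bool" where
  "separable f \<longleftrightarrow> coprime f (pderiv f)"

end

theory Submission
  imports Defs
begin

text \<open>Only the terms with \<open>m \<le> 1\<close> of the product formula reach the weight
  \<open>v(P) + v(F) - (\<rho> + \<sigma>)\<close>, where the commutator is the Poisson bracket of the leading
  forms. Setting \<open>x = 1\<close> and using Euler's relation for \<open>(\<rho>, \<sigma>)\<close>-homogeneous forms, the
  hypothesis forces \<open>v(F) = \<rho> + \<sigma>\<close> and becomes the identity \<open>A = a A' G - b A G'\<close> in \<open>K[y]\<close>,
  where \<open>A\<close>, \<open>G\<close> are the images of \<open>\<ell>(P)\<close>, \<open>F\<close> and \<open>a = (\<rho> + \<sigma>)/\<rho> \<noteq> 0\<close>.
  Let \<open>q\<close> be prime and \<open>c\<close> its multiplicity in \<open>A\<close>. If \<open>q\<^sup>2\<close> divided \<open>G\<close>, both terms on the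
  right would be divisible by \<open>q\<^sup>c\<^sup>+\<^sup>1\<close>; if \<open>q\<close> divided \<open>A\<close> but not \<open>G\<close>, then \<open>a A' G\<close>
  would have multiplicity exactly \<open>c - 1\<close>, although it equals \<open>A + b A G'\<close>. As \<open>A\<close>, \<open>G\<close> are
  \<open>f\<^sub>P\<close>, \<open>f\<^sub>F\<close> times powers of \<open>y\<close> and \<open>f\<^sub>P(0) \<noteq> 0\<close>, both claims follow.\<close>

section \<open>Polynomials in one variable\<close>

lemma pderiv_sum: "pderiv (sum f A) = (\<Sum>x\<in>A. pderiv (f x))"
  by (induction A rule: infinite_finite_induct) (simp_all add: pderiv_add)

lemma smult_sum_right: "smult c (sum f A) = (\<Sum>x\<in>A. smult c (f x))"
  by (induction A rule: infinite_finite_induct) (simp_all add: smult_add_right)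

lemma monom_1_1_mult_pderiv_monom: "monom 1 1 * pderiv (monom a n) = monom (of_nat n * a) n"
  by (cases n) (simp_all add: pderiv_monom mult_monom)

lemma pderiv_power_Suc_mult:
  "pderiv (q ^ Suc n * w) = q ^ n * (smult (of_nat (Suc n)) (pderiv q) * w + q * pderiv w)"
  unfolding pderiv_mult pderiv_power_Suc by (simp add: algebra_simps)

lemma power_dvd_imp_dvd_pderiv:
  assumes "q ^ n dvd p"
  shows "q ^ (n - 1) dvd pderiv p"
proof (cases n)
  case (Suc m)
  with assms obtain w where "p = q ^ Suc m * w" by (auto elim: dvdE)
  then show ?thesis using Suc by (simp only: pderiv_power_Suc_mult) simp
qed simp

lemma prime_elem_not_dvd_pderiv:
  fixes q :: "'a::field_char_0 poly"
  assumes "prime_elem q"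
  shows "\<not> q dvd pderiv q"
  using assms by (auto simp: prime_elem_def is_unit_iff_degree)

lemma prime_dvd_pderiv_imp_square_dvd:
  fixes q p :: "'a::field_char_0 poly"
  assumes q: "prime_elem q" and "q dvd p" and "q dvd pderiv p"
  shows "q ^ 2 dvd p"
proof -
  obtain u where p: "p = q * u" using \<open>q dvd p\<close> by (auto elim: dvdE)
  have "q dvd u * pderiv q"
    using \<open>q dvd pderiv p\<close> by (simp add: p pderiv_mult dvd_add_right_iff)
  hence "q dvd u" using q by (metis prime_elem_dvd_mult_iff prime_elem_not_dvd_pderiv)
  thus ?thesis by (simp add: p power2_eq_square)
qed

lemma prime_dvd_monom_imp_poly_0:
  fixes q :: "'a::field poly"
  assumes q: "prime_elem q" and "q dvd monom 1 t"
  shows "poly q 0 = 0"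
proof -
  have "q dvd [:0, 1:]"
    using assms prime_elem_dvd_power by (metis monom_altdef smult_1_left)
  then obtain r where r: "[:0, 1:] = q * r" by (auto elim: dvdE)
  have "is_unit r"
    using irreducibleD[OF irreducible_linear_field_poly r] q by (auto simp: prime_elem_def)
  hence "poly r 0 \<noteq> 0" by (auto simp: is_unit_poly_iff)
  thus ?thesis using arg_cong[OF r, of "\<lambda>p. poly p 0"] by simp
qed

lemma prime_power_decomp:
  fixes x q :: "'a::field poly"
  assumes "x \<noteq> 0" and "prime_elem q"
  obtains c w where "x = q ^ c * w" and "\<not> q dvd w"
  using assms(1)
proof (induction "degree x" arbitrary: x thesis rule: less_induct)
  case less
  show ?case
  proof (cases "q dvd x")
    case True
    then obtain y where y: "x = q * y" by (auto elim: dvdE)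
    have "y \<noteq> 0" and "q \<noteq> 0" and "degree q > 0"
      using less.prems y assms(2) by (auto simp: prime_elem_def is_unit_iff_degree)
    hence "degree y < degree x" by (simp add: y degree_mult_eq)
    then obtain c w where "y = q ^ c * w" "\<not> q dvd w" using less.hyps \<open>y \<noteq> 0\<close> by metis
    then show ?thesis using less.prems(1)[of "Suc c" w] by (simp add: y mult.assoc)
  qed (use less.prems(1)[of 0 x] in simp)
qed

lemma irreducible_factor_exists:
  fixes p :: "'a::field poly"
  assumes "p \<noteq> 0" and "\<not> is_unit p"
  obtains q where "irreducible q" and "q dvd p"
  using assms
proof (induction "degree p" arbitrary: p thesis rule: less_induct)
  case less
  show ?case
  proof (cases "irreducible p")
    case False
    then obtain a b where ab: "p = a * b" "\<not> is_unit a" "\<not> is_unit b"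
      using less.prems by (auto simp: irreducible_def)
    have "a \<noteq> 0" "b \<noteq> 0" "degree b > 0"
      using ab less.prems by (auto simp: is_unit_iff_degree)
    hence "degree a < degree p" by (simp add: ab degree_mult_eq)
    then obtain q where "irreducible q" "q dvd a" using less.hyps \<open>a \<noteq> 0\<close> ab(2) by metis
    then show ?thesis using less.prems(1) ab(1) by auto
  qed (use less.prems(1) in auto)
qed

lemma not_square_dvd_if_bracket_eq:
  fixes A G q :: "'a::field_char_0 poly"
  assumes eq: "A = smult a (pderiv A * G) - smult b (A * pderiv G)"
    and "A \<noteq> 0" and q: "prime_elem q"
  shows "\<not> q ^ 2 dvd G"
proof
  assume qG: "q ^ 2 dvd G"
  obtain c w where Aw: "A = q ^ c * w" and nw: "\<not> q dvd w"
    using prime_power_decomp[OF \<open>A \<noteq> 0\<close> q] .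
  have "q ^ c dvd A" by (simp add: Aw)
  hence "q ^ (c - 1) * q ^ 2 dvd pderiv A * G"
    using qG by (intro mult_dvd_mono power_dvd_imp_dvd_pderiv)
  moreover have "q ^ Suc c dvd q ^ (c - 1 + 2)"
    by (rule le_imp_power_dvd) simp
  ultimately have first: "q ^ Suc c dvd pderiv A * G" by (metis dvd_trans power_add)
  have "q dvd pderiv G" using power_dvd_imp_dvd_pderiv[OF qG] by simp
  hence second: "q ^ Suc c dvd A * pderiv G"
    using \<open>q ^ c dvd A\<close> by (metis mult_dvd_mono power_Suc2)
  have "q ^ Suc c dvd A" by (subst eq) (intro dvd_diff dvd_smult first second)
  hence "q ^ c * q dvd q ^ c * w" by (simp only: Aw power_Suc2)
  thus False using q nw by (subst (asm) dvd_times_left_cancel_iff) (auto simp: prime_elem_def)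
qed

lemma prime_dvd_if_bracket_eq:
  fixes A G q :: "'a::field_char_0 poly"
  assumes eq: "A = smult a (pderiv A * G) - smult b (A * pderiv G)"
    and "a \<noteq> 0" and "A \<noteq> 0" and q: "prime_elem q" and "q dvd A"
  shows "q dvd G"
proof (rule ccontr)
  assume nG: "\<not> q dvd G"
  obtain c w where Aw: "A = q ^ c * w" and nw: "\<not> q dvd w"
    using prime_power_decomp[OF \<open>A \<noteq> 0\<close> q] .
  obtain n where c: "c = Suc n"
    using \<open>q dvd A\<close> nw Aw by (cases c) auto
  have "q ^ Suc n dvd A + smult b (A * pderiv G)"
    using Aw c by (metis dvd_add dvd_smult dvd_mult2 dvd_triv_left)
  also have "A + smult b (A * pderiv G) = smult a (pderiv A * G)"
    using eq by (simp add: algebra_simps)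
  also have "\<dots> = q ^ n * smult (a * of_nat (Suc n)) (pderiv q * w * G) + q ^ Suc n * smult a (pderiv w * G)"
    by (simp only: Aw c pderiv_power_Suc_mult) (simp add: algebra_simps smult_add_right smult_add_left)
  finally have "q ^ Suc n dvd q ^ n * smult (a * of_nat (Suc n)) (pderiv q * w * G)"
    by (metis dvd_add_left_iff dvd_triv_left)
  hence "q ^ n * q dvd q ^ n * smult (a * of_nat (Suc n)) (pderiv q * w * G)"
    by (simp only: power_Suc2)
  hence "q dvd smult (a * of_nat (Suc n)) (pderiv q * w * G)"
    using q by (subst (asm) dvd_times_left_cancel_iff) (auto simp: prime_elem_def)
  hence "q dvd pderiv q * w * G" using \<open>a \<noteq> 0\<close> by (simp add: dvd_smult_cancel del: of_nat_Suc)
  thus False using q nw nG by (metis prime_elem_dvd_mult_iff prime_elem_not_dvd_pderiv)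
qed

lemma separable_if_square_free:
  fixes g :: "'a::field_char_0 poly"
  assumes "g \<noteq> 0" and square_free: "\<And>q. prime_elem q \<Longrightarrow> \<not> q ^ 2 dvd g"
  shows "separable g"
  unfolding separable_def
proof (rule ccontr)
  assume "\<not> coprime g (pderiv g)"
  then obtain c where c: "c dvd g" "c dvd pderiv g" "\<not> is_unit c" by (rule not_coprimeE)
  moreover have "c \<noteq> 0" using c(1) \<open>g \<noteq> 0\<close> by auto
  ultimately obtain q where "irreducible q" "q dvd c" by (metis irreducible_factor_exists)
  hence "prime_elem q" and "q dvd g" and "q dvd pderiv g"
    using c field_poly_irreducible_imp_prime dvd_trans by blast+
  thus False using prime_dvd_pderiv_imp_square_dvd square_free by blast
qed

lemma prime_dvd_monom_mult_imp_dvd: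
  fixes q g :: "'a::field poly"
  assumes "prime_elem q" and "poly q 0 \<noteq> 0" and "q dvd monom 1 t * g"
  shows "q dvd g"
  using assms prime_dvd_monom_imp_poly_0 by (auto simp: prime_elem_dvd_mult_iff)

lemma separable_and_factors_dvd_if_bracket_eq:
  fixes f g :: "'a::field_char_0 poly" and s t :: nat
  defines "A \<equiv> monom 1 s * f" and "G \<equiv> monom 1 t * g"
  assumes bracket: "A = smult a (pderiv A * G) - smult b (A * pderiv G)"
    and "a \<noteq> 0" and "poly f 0 \<noteq> 0" and "g \<noteq> 0"
  shows "separable g" and "irreducible q \<Longrightarrow> q dvd f \<Longrightarrow> q dvd g"
proof -
  have "A \<noteq> 0" using \<open>poly f 0 \<noteq> 0\<close> by (auto simp: A_def)
  show "separable g"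
  proof (rule separable_if_square_free[OF \<open>g \<noteq> 0\<close>])
    fix q :: "'a poly" assume "prime_elem q"
    show "\<not> q ^ 2 dvd g"
      using not_square_dvd_if_bracket_eq[OF bracket \<open>A \<noteq> 0\<close> \<open>prime_elem q\<close>]
      unfolding G_def by (metis dvd_mult)
  qed
  assume "irreducible q" and "q dvd f"
  have "prime_elem q" using \<open>irreducible q\<close> by (rule field_poly_irreducible_imp_prime)
  moreover have "poly q 0 \<noteq> 0" using \<open>q dvd f\<close> \<open>poly f 0 \<noteq> 0\<close> by (auto elim: dvdE)
  moreover have "q dvd G"
    using prime_dvd_if_bracket_eq[OF bracket \<open>a \<noteq> 0\<close> \<open>A \<noteq> 0\<close> \<open>prime_elem q\<close>] \<open>q dvd f\<close>
    by (simp add: A_def)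
  ultimately show "q dvd g" using prime_dvd_monom_mult_imp_dvd unfolding G_def by blast
qed

section \<open>The product formula in \<open>W\<^sup>(\<^sup>l\<^sup>)\<close>\<close>

definition wmult_exp :: "nat \<Rightarrow> int \<times> nat \<Rightarrow> int \<times> nat \<Rightarrow> nat \<Rightarrow> int \<times> nat" where
  "wmult_exp l x y m = (fst x + fst y - int m * int l, snd x + snd y - m)"

definition wmult_coeff ::
    "nat \<Rightarrow> 'a::field_char_0 wel \<Rightarrow> 'a wel \<Rightarrow> int \<times> nat \<Rightarrow> int \<times> nat \<Rightarrow> nat \<Rightarrow> 'a" where
  "wmult_coeff l P Q x y m =
     P x * Q y * of_nat (snd x choose m) * falling (of_int (fst y) / of_nat l) m"

definition wmult_exps :: "nat \<Rightarrow> 'a::zero wel \<Rightarrow> 'a wel \<Rightarrow> (int \<times> nat) set" where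
  "wmult_exps l P Q =
     (\<lambda>(x, y, m). wmult_exp l x y m) ` (SIGMA x:wsupp P. wsupp Q \<times> {..snd x})"

text \<open>The terms of the product with \<open>m \<ge> 1\<close>; the terms with \<open>m = 0\<close> form the
  commutative product, which cancels in the commutator.\<close>

definition wcorr :: "nat \<Rightarrow> 'a::field_char_0 wel \<Rightarrow> 'a wel \<Rightarrow> 'a wel" where
  "wcorr l P Q e = (\<Sum>x\<in>wsupp P. \<Sum>y\<in>wsupp Q. \<Sum>m\<in>{1..snd x}.
     if wmult_exp l x y m = e then wmult_coeff l P Q x y m else 0)"

lemma wmult_eq_sum:
  "wmult l P Q e = (\<Sum>x\<in>wsupp P. \<Sum>y\<in>wsupp Q. \<Sum>m\<le>snd x.
     if wmult_exp l x y m = e then wmult_coeff l P Q x y m else 0)"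
  unfolding wmult_coeff_def wmult_exp_def
  by (cases e) (simp add: wmult_def split_def prod_eq_iff conj_commute cong: if_cong)

lemma finite_wmult_exps:
  "finite (wsupp P) \<Longrightarrow> finite (wsupp Q) \<Longrightarrow> finite (wmult_exps l P Q)"
  unfolding wmult_exps_def by (auto intro!: finite_SigmaI)

lemma wmult_exp_in_wmult_exps:
  "x \<in> wsupp P \<Longrightarrow> y \<in> wsupp Q \<Longrightarrow> m \<le> snd x \<Longrightarrow> wmult_exp l x y m \<in> wmult_exps l P Q"
  unfolding wmult_exps_def by (rule image_eqI[where x = "(x, y, m)"]) auto

lemma wsupp_wmult_subset: "wsupp (wmult l P Q) \<subseteq> wmult_exps l P Q"
proof
  fix e assume "e \<in> wsupp (wmult l P Q)"
  hence "wmult l P Q e \<noteq> 0" by (simp add: wsupp_def)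
  then obtain x y m where "x \<in> wsupp P" "y \<in> wsupp Q" "m \<le> snd x"
    and "(if wmult_exp l x y m = e then wmult_coeff l P Q x y m else 0) \<noteq> 0"
    unfolding wmult_eq_sum by (auto elim!: sum.not_neutral_contains_not_neutral)
  hence "x \<in> wsupp P" "y \<in> wsupp Q" "m \<le> snd x" "wmult_exp l x y m = e"
    by (auto split: if_splits)
  thus "e \<in> wmult_exps l P Q" by (blast intro: wmult_exp_in_wmult_exps)
qed

lemma wsupp_wcomm_subset: "wsupp (wcomm l P Q) \<subseteq> wmult_exps l P Q \<union> wmult_exps l Q P"
proof
  fix e assume "e \<in> wsupp (wcomm l P Q)"
  hence "e \<in> wsupp (wmult l P Q) \<or> e \<in> wsupp (wmult l Q P)"
    by (auto simp: wsupp_def wcomm_def)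
  thus "e \<in> wmult_exps l P Q \<union> wmult_exps l Q P" using wsupp_wmult_subset by blast
qed

lemma finite_wsupp_wcomm:
  "finite (wsupp P) \<Longrightarrow> finite (wsupp Q) \<Longrightarrow> finite (wsupp (wcomm l P Q))"
  using wsupp_wcomm_subset by (rule finite_subset) (simp add: finite_wmult_exps)

lemma wcomm_eq_wcorr_diff: "wcomm l P Q e = wcorr l P Q e - wcorr l Q P e"
proof -
  have split: "\<And>j. {..j} = insert (0::nat) {1..j}" by auto
  have w: "wmult l P Q e = (\<Sum>x\<in>wsupp P. \<Sum>y\<in>wsupp Q.
      if (fst x + fst y, snd x + snd y) = e then P x * Q y else 0) + wcorr l P Q e" for P Q
    unfolding wmult_eq_sum wcorr_def wmult_coeff_def wmult_exp_def
    by (simp add: split sum.distrib falling_def cong: if_cong)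
  have "(\<Sum>x\<in>wsupp P. \<Sum>y\<in>wsupp Q. if (fst x + fst y, snd x + snd y) = e then P x * Q y else 0) =
        (\<Sum>y\<in>wsupp Q. \<Sum>x\<in>wsupp P. if (fst y + fst x, snd y + snd x) = e then Q y * P x else 0)"
    by (subst sum.swap) (intro sum.cong refl, simp add: add.commute mult.commute)
  then show ?thesis unfolding wcomm_def w by simp
qed

lemma wt_wmult_exp:
  assumes "l > 0" and "m \<le> snd x"
  shows "wt l \<rho> \<sigma> (wmult_exp l x y m) = wt l \<rho> \<sigma> x + wt l \<rho> \<sigma> y - of_nat m * of_int (\<rho> + \<sigma>)"
  using assms by (simp add: wt_def wmult_exp_def of_nat_diff field_simps)

lemma wt_le_vval: "finite (wsupp P) \<Longrightarrow> e \<in> wsupp P \<Longrightarrow> wt l \<rho> \<sigma> e \<le> vval l \<rho> \<sigma> P"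
  unfolding vval_def by (rule Max_ge) auto

lemma vval_attained:
  assumes "finite (wsupp P)" and "P \<noteq> (\<lambda>_. 0)"
  obtains e where "e \<in> wsupp P" and "wt l \<rho> \<sigma> e = vval l \<rho> \<sigma> P"
proof -
  have "wsupp P \<noteq> {}" using assms(2) by (auto simp: wsupp_def)
  hence "vval l \<rho> \<sigma> P \<in> wt l \<rho> \<sigma> ` wsupp P"
    unfolding vval_def using assms(1) by (intro Max_in) auto
  thus ?thesis using that by auto
qed

lemma wsupp_lead: "wsupp (lead l \<rho> \<sigma> P) = {e \<in> wsupp P. wt l \<rho> \<sigma> e = vval l \<rho> \<sigma> P}"
  by (auto simp: wsupp_def lead_def)

lemma homogeneousD: "homogeneous l \<rho> \<sigma> F \<Longrightarrow> e \<in> wsupp F \<Longrightarrow> wt l \<rho> \<sigma> e = vval l \<rho> \<sigma> F"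
  by (metis (mono_tags, lifting) homogeneous_def mem_Collect_eq wsupp_lead)

text \<open>Each term with \<open>m \<ge> 1\<close> drops the weight by at least \<open>\<rho> + \<sigma>\<close>.\<close>

lemma wcorr_eq_0_above:
  assumes "finite (wsupp P)" and "finite (wsupp Q)" and "l > 0" and "\<rho> + \<sigma> > 0"
    and "wt l \<rho> \<sigma> e > vval l \<rho> \<sigma> P + vval l \<rho> \<sigma> Q - of_int (\<rho> + \<sigma>)"
  shows "wcorr l P Q e = 0"
  unfolding wcorr_def
proof (intro sum.neutral ballI)
  fix x y m assume x: "x \<in> wsupp P" and y: "y \<in> wsupp Q" and m: "m \<in> {1..snd x}"
  have "of_nat m * (of_int (\<rho> + \<sigma>) :: rat) \<ge> 1 * of_int (\<rho> + \<sigma>)"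
    using m assms(4) by (intro mult_right_mono) auto
  moreover have "wt l \<rho> \<sigma> x \<le> vval l \<rho> \<sigma> P" and "wt l \<rho> \<sigma> y \<le> vval l \<rho> \<sigma> Q"
    using wt_le_vval assms(1,2) x y by blast+
  ultimately have "wt l \<rho> \<sigma> (wmult_exp l x y m) \<le> vval l \<rho> \<sigma> P + vval l \<rho> \<sigma> Q - of_int (\<rho> + \<sigma>)"
    using m assms(3) by (simp add: wt_wmult_exp)
  thus "(if wmult_exp l x y m = e then wmult_coeff l P Q x y m else 0) = 0"
    using assms(5) by auto
qed

lemma wcomm_eq_0_above:
  assumes "finite (wsupp P)" and "finite (wsupp Q)" and "l > 0" and "\<rho> + \<sigma> > 0"
    and "wt l \<rho> \<sigma> e > vval l \<rho> \<sigma> P + vval l \<rho> \<sigma> Q - of_int (\<rho> + \<sigma>)"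
  shows "wcomm l P Q e = 0"
  using wcorr_eq_0_above[OF assms] wcorr_eq_0_above[OF assms(2,1,3,4)] assms(5)
  by (simp add: wcomm_eq_wcorr_diff add.commute)

lemma sum_wcorr_terms_top_weight:
  assumes "l > 0" and "\<rho> + \<sigma> > 0" and "finite (wsupp P)" and "finite (wsupp Q)"
    and x: "x \<in> wsupp P" and y: "y \<in> wsupp Q"
    and S: "\<And>m. 1 \<le> m \<Longrightarrow> m \<le> snd x \<Longrightarrow> wmult_exp l x y m \<in> S \<longleftrightarrow>
      wt l \<rho> \<sigma> (wmult_exp l x y m) = vval l \<rho> \<sigma> P + vval l \<rho> \<sigma> Q - of_int (\<rho> + \<sigma>)"
  shows "(\<Sum>m\<in>{1..snd x}. if wmult_exp l x y m \<in> S
            then monom (wmult_coeff l P Q x y m) (Suc (snd (wmult_exp l x y m))) else 0) =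
         (if wt l \<rho> \<sigma> x = vval l \<rho> \<sigma> P \<and> wt l \<rho> \<sigma> y = vval l \<rho> \<sigma> Q
          then monom (P x * Q y * (of_nat (snd x) * of_int (fst y) / of_nat l)) (snd x + snd y)
          else 0)"
    (is "?L = ?R")
proof -
  have wx: "wt l \<rho> \<sigma> x \<le> vval l \<rho> \<sigma> P" and wy: "wt l \<rho> \<sigma> y \<le> vval l \<rho> \<sigma> Q"
    using wt_le_vval assms(3,4) x y by blast+
  have "?L = (\<Sum>m\<in>{1..snd x}. if m = 1 then ?R else 0)"
  proof (rule sum.cong[OF refl])
    fix m assume m: "m \<in> {1..snd x}"
    have wp: "wt l \<rho> \<sigma> (wmult_exp l x y m) =
        wt l \<rho> \<sigma> x + wt l \<rho> \<sigma> y - of_nat m * of_int (\<rho> + \<sigma>)"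
      using m assms(1) by (intro wt_wmult_exp) auto
    show "(if wmult_exp l x y m \<in> S
            then monom (wmult_coeff l P Q x y m) (Suc (snd (wmult_exp l x y m))) else 0) =
          (if m = 1 then ?R else 0)"
    proof (cases "m = 1")
      case True
      have "wmult_exp l x y m \<in> S \<longleftrightarrow>
          wt l \<rho> \<sigma> x = vval l \<rho> \<sigma> P \<and> wt l \<rho> \<sigma> y = vval l \<rho> \<sigma> Q"
        using S m wp wx wy True by auto
      moreover have "wmult_coeff l P Q x y m = P x * Q y * (of_nat (snd x) * of_int (fst y) / of_nat l)"
        using True by (simp add: wmult_coeff_def falling_def)
      moreover have "Suc (snd (wmult_exp l x y m)) = snd x + snd y"
        using True m by (simp add: wmult_exp_def)
      ultimately show ?thesis using True by simp
    next
      case False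
      with m have "of_nat m * (of_int (\<rho> + \<sigma>) :: rat) \<ge> 2 * of_int (\<rho> + \<sigma>)"
        using assms(2) by (intro mult_right_mono) auto
      hence "wt l \<rho> \<sigma> (wmult_exp l x y m) < vval l \<rho> \<sigma> P + vval l \<rho> \<sigma> Q - of_int (\<rho> + \<sigma>)"
        using wp wx wy assms(2) by simp
      then show ?thesis using S m False by auto
    qed
  qed
  also have "\<dots> = ?R"
    by (subst sum.delta) (cases "snd x", auto)
  finally show ?thesis .
qed

lemma sum_monom_wcorr_top_weight:
  assumes "l > 0" and "\<rho> + \<sigma> > 0" and "finite (wsupp P)" and "finite (wsupp Q)" and "finite S"
    and S: "\<And>x y m. x \<in> wsupp P \<Longrightarrow> y \<in> wsupp Q \<Longrightarrow> 1 \<le> m \<Longrightarrow> m \<le> snd x \<Longrightarrow>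
      wmult_exp l x y m \<in> S \<longleftrightarrow>
      wt l \<rho> \<sigma> (wmult_exp l x y m) = vval l \<rho> \<sigma> P + vval l \<rho> \<sigma> Q - of_int (\<rho> + \<sigma>)"
  shows "(\<Sum>e\<in>S. monom (wcorr l P Q e) (Suc (snd e))) =
         (\<Sum>x\<in>wsupp P. \<Sum>y\<in>wsupp Q.
            if wt l \<rho> \<sigma> x = vval l \<rho> \<sigma> P \<and> wt l \<rho> \<sigma> y = vval l \<rho> \<sigma> Q
            then monom (P x * Q y * (of_nat (snd x) * of_int (fst y) / of_nat l)) (snd x + snd y)
            else 0)"
    (is "_ = ?rhs")
proof -
  have "(\<Sum>e\<in>S. monom (wcorr l P Q e) (Suc (snd e))) =
      (\<Sum>x\<in>wsupp P. \<Sum>y\<in>wsupp Q. \<Sum>m\<in>{1..snd x}. \<Sum>e\<in>S.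
         if wmult_exp l x y m = e then monom (wmult_coeff l P Q x y m) (Suc (snd e)) else 0)"
    unfolding wcorr_def monom_sum by (simp only: sum.swap[where A = S]) (intro sum.cong refl, simp)
  also have "\<dots> = (\<Sum>x\<in>wsupp P. \<Sum>y\<in>wsupp Q. \<Sum>m\<in>{1..snd x}.
      if wmult_exp l x y m \<in> S
      then monom (wmult_coeff l P Q x y m) (Suc (snd (wmult_exp l x y m))) else 0)"
    unfolding sum.delta'[OF assms(5)] ..
  also have "\<dots> = ?rhs"
    using sum_wcorr_terms_top_weight[OF assms(1-4) _ _ S] by (intro sum.cong refl) auto
  finally show ?thesis .
qed

section \<open>Top-weight parts read in \<open>K[y]\<close>\<close>

text \<open>The image of \<open>L\<close> under \<open>x \<mapsto> 1\<close>. For a \<open>(\<rho>, \<sigma>)\<close>-homogeneous \<open>L\<close> with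
  \<open>\<rho> \<noteq> 0\<close> nothing is lost, as the \<open>y\<close>-degree of a term determines its \<open>x\<close>-exponent.\<close>

definition ypoly :: "'a::comm_monoid_add wel \<Rightarrow> 'a poly" where
  "ypoly L = (\<Sum>e\<in>wsupp L. monom (L e) (snd e))"

definition wpart :: "nat \<Rightarrow> int \<Rightarrow> int \<Rightarrow> rat \<Rightarrow> 'a::zero wel \<Rightarrow> 'a wel" where
  "wpart l \<rho> \<sigma> w P = (\<lambda>e. if wt l \<rho> \<sigma> e = w then P e else 0)"

lemma ypoly_eq_sum_superset:
  assumes "finite S" and "wsupp L \<subseteq> S"
  shows "ypoly L = (\<Sum>e\<in>S. monom (L e) (snd e))"
  unfolding ypoly_def using assms by (intro sum.mono_neutral_left) (auto simp: wsupp_def)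

lemma lead_eq_wpart_vval: "lead l \<rho> \<sigma> P = wpart l \<rho> \<sigma> (vval l \<rho> \<sigma> P) P"
  by (auto simp: lead_def wpart_def wsupp_def)

lemma wt_cross_identity:
  assumes "l > 0" and "\<rho> \<noteq> 0" and "wt l \<rho> \<sigma> x = v" and "wt l \<rho> \<sigma> y = w"
  shows "(of_nat (snd x) * of_int (fst y) / of_nat l - of_nat (snd y) * of_int (fst x) / of_nat l :: 'a::field_char_0)
    = of_rat (w / of_int \<rho>) * of_nat (snd x) - of_rat (v / of_int \<rho>) * of_nat (snd y)"
proof -
  have "v * of_nat l = of_int \<rho> * of_int (fst x) + of_int \<sigma> * (of_nat l * of_nat (snd x))"
    and "w * of_nat l = of_int \<rho> * of_int (fst y) + of_int \<sigma> * (of_nat l * of_nat (snd y))"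
    using assms by (simp_all add: wt_def field_simps)
  hence "v * (of_nat l * of_nat (snd y)) + of_int \<rho> * (of_int (fst y) * of_nat (snd x)) =
      w * (of_nat l * of_nat (snd x)) + of_int \<rho> * (of_int (fst x) * of_nat (snd y))"
    by algebra
  hence r: "(of_nat (snd x) * of_int (fst y) / of_nat l - of_nat (snd y) * of_int (fst x) / of_nat l :: rat)
      = w / of_int \<rho> * of_nat (snd x) - v / of_int \<rho> * of_nat (snd y)"
    using assms(1,2) by (simp add: field_simps)
  have "(of_nat (snd x) * of_int (fst y) / of_nat l - of_nat (snd y) * of_int (fst x) / of_nat l :: 'a)
      = of_rat (of_nat (snd x) * of_int (fst y) / of_nat l - of_nat (snd y) * of_int (fst x) / of_nat l)"
    by (simp add: of_rat_diff of_rat_mult of_rat_divide)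
  also have "\<dots> = of_rat (w / of_int \<rho> * of_nat (snd x) - v / of_int \<rho> * of_nat (snd y))"
    by (simp only: r)
  finally show ?thesis by (simp only: of_rat_diff of_rat_mult of_rat_of_nat_eq)
qed

lemma sum_top_weight_eq_sum_lead:
  assumes "finite (wsupp P)" and "homogeneous l \<rho> \<sigma> Q"
  shows "(\<Sum>x\<in>wsupp P. \<Sum>y\<in>wsupp Q.
            if wt l \<rho> \<sigma> x = vval l \<rho> \<sigma> P \<and> wt l \<rho> \<sigma> y = vval l \<rho> \<sigma> Q then f x y else 0) =
         (\<Sum>x\<in>wsupp (lead l \<rho> \<sigma> P). \<Sum>y\<in>wsupp Q. f x y)"
proof -
  have "(\<Sum>x\<in>wsupp P. \<Sum>y\<in>wsupp Q.
            if wt l \<rho> \<sigma> x = vval l \<rho> \<sigma> P \<and> wt l \<rho> \<sigma> y = vval l \<rho> \<sigma> Q then f x y else 0) =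
        (\<Sum>x\<in>wsupp P. if wt l \<rho> \<sigma> x = vval l \<rho> \<sigma> P then (\<Sum>y\<in>wsupp Q. f x y) else 0)"
    using homogeneousD[OF assms(2)] by (intro sum.cong refl) auto
  then show ?thesis using assms(1) by (simp add: wsupp_lead sum.inter_filter)
qed

lemma monom_1_1_mult_ypoly_pderiv:
  "monom 1 1 * pderiv (ypoly L) = (\<Sum>e\<in>wsupp L. monom (of_nat (snd e) * L e) (snd e))"
  unfolding ypoly_def pderiv_sum sum_distrib_left monom_1_1_mult_pderiv_monom ..

lemma monom_1_1_mult_ypoly_wpart:
  fixes C :: "'a::comm_semiring_1 wel"
  assumes "finite S" and "{e \<in> wsupp C. wt l \<rho> \<sigma> e = w} \<subseteq> S" and "\<And>e. e \<in> S \<Longrightarrow> wt l \<rho> \<sigma> e = w"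
  shows "monom 1 1 * ypoly (wpart l \<rho> \<sigma> w C) = (\<Sum>e\<in>S. monom (C e) (Suc (snd e)))"
proof -
  have "wsupp (wpart l \<rho> \<sigma> w C) \<subseteq> S"
    using assms(2) by (auto simp: wpart_def wsupp_def split: if_splits)
  hence "ypoly (wpart l \<rho> \<sigma> w C) = (\<Sum>e\<in>S. monom (wpart l \<rho> \<sigma> w C e) (snd e))"
    by (rule ypoly_eq_sum_superset[OF assms(1)])
  also have "\<dots> = (\<Sum>e\<in>S. monom (C e) (snd e))"
    using assms(3) by (intro sum.cong refl) (simp add: wpart_def)
  finally show ?thesis by (simp add: sum_distrib_left mult_monom)
qed

lemma monom_1_1_mult_ypoly_bracket:
  fixes L Q :: "'a::idom wel"
  shows "monom 1 1 * (smult c (pderiv (ypoly L) * ypoly Q) - smult d (ypoly L * pderiv (ypoly Q))) =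
    (\<Sum>x\<in>wsupp L. \<Sum>y\<in>wsupp Q.
       monom (L x * Q y * (c * of_nat (snd x) - d * of_nat (snd y))) (snd x + snd y))"
proof -
  have "monom 1 1 * (smult c (pderiv (ypoly L) * ypoly Q) - smult d (ypoly L * pderiv (ypoly Q))) =
      smult c ((monom 1 1 * pderiv (ypoly L)) * ypoly Q) - smult d (ypoly L * (monom 1 1 * pderiv (ypoly Q)))"
    by (simp add: algebra_simps)
  also have "\<dots> =
      (\<Sum>x\<in>wsupp L. \<Sum>y\<in>wsupp Q. monom (c * (of_nat (snd x) * L x * Q y)) (snd x + snd y)) -
      (\<Sum>x\<in>wsupp L. \<Sum>y\<in>wsupp Q. monom (d * (L x * (of_nat (snd y) * Q y))) (snd x + snd y))"
    unfolding monom_1_1_mult_ypoly_pderiv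
    unfolding ypoly_def sum_product smult_sum_right by (simp add: mult_monom smult_monom)
  also have "\<dots> = (\<Sum>x\<in>wsupp L. \<Sum>y\<in>wsupp Q.
       monom (L x * Q y * (c * of_nat (snd x) - d * of_nat (snd y))) (snd x + snd y))"
    unfolding sum_subtractf[symmetric] diff_monom
    by (intro sum.cong refl arg_cong2[where f = monom]) (simp_all add: algebra_simps)
  finally show ?thesis .
qed

lemma sum_monom_wcomm_top_weight:
  fixes P Q :: "'a::field_char_0 wel"
  assumes "l > 0" and "\<rho> + \<sigma> > 0"
    and fP: "finite (wsupp P)" and fQ: "finite (wsupp Q)" and hom: "homogeneous l \<rho> \<sigma> Q"
  defines "S \<equiv> {e \<in> wmult_exps l P Q \<union> wmult_exps l Q P.
      wt l \<rho> \<sigma> e = vval l \<rho> \<sigma> P + vval l \<rho> \<sigma> Q - of_int (\<rho> + \<sigma>)}"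
  shows "(\<Sum>e\<in>S. monom (wcomm l P Q e) (Suc (snd e))) =
    (\<Sum>x\<in>wsupp (lead l \<rho> \<sigma> P). \<Sum>y\<in>wsupp Q.
       monom (P x * Q y * (of_nat (snd x) * of_int (fst y) / of_nat l -
                           of_nat (snd y) * of_int (fst x) / of_nat l)) (snd x + snd y))"
proof -
  have fS: "finite S" using fP fQ by (simp add: S_def finite_wmult_exps)
  have "(\<Sum>e\<in>S. monom (wcorr l P Q e) (Suc (snd e))) = (\<Sum>x\<in>wsupp (lead l \<rho> \<sigma> P). \<Sum>y\<in>wsupp Q.
      monom (P x * Q y * (of_nat (snd x) * of_int (fst y) / of_nat l)) (snd x + snd y))"
    unfolding sum_top_weight_eq_sum_lead[OF fP hom, symmetric]
    by (rule sum_monom_wcorr_top_weight[OF assms(1,2) fP fQ fS])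
       (auto simp: S_def intro: wmult_exp_in_wmult_exps)
  moreover have "(\<Sum>e\<in>S. monom (wcorr l Q P e) (Suc (snd e))) = (\<Sum>y\<in>wsupp Q. \<Sum>x\<in>wsupp P.
      if wt l \<rho> \<sigma> y = vval l \<rho> \<sigma> Q \<and> wt l \<rho> \<sigma> x = vval l \<rho> \<sigma> P
      then monom (Q y * P x * (of_nat (snd y) * of_int (fst x) / of_nat l)) (snd y + snd x) else 0)"
    by (rule sum_monom_wcorr_top_weight[OF assms(1,2) fQ fP fS])
       (auto simp: S_def add.commute intro: wmult_exp_in_wmult_exps)
  moreover have "\<dots> = (\<Sum>x\<in>wsupp (lead l \<rho> \<sigma> P). \<Sum>y\<in>wsupp Q.
      monom (P x * Q y * (of_nat (snd y) * of_int (fst x) / of_nat l)) (snd x + snd y))"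
    unfolding sum_top_weight_eq_sum_lead[OF fP hom, symmetric]
    by (subst sum.swap) (intro sum.cong refl, auto simp: add.commute mult.commute)
  ultimately show ?thesis
    unfolding wcomm_eq_wcorr_diff diff_monom[symmetric] sum_subtractf right_diff_distrib
    by simp
qed

text \<open>On a form of weight \<open>v\<close>, Euler's relation \<open>\<rho> x \<partial>\<^sub>x = v - \<sigma> y \<partial>\<^sub>y\<close> eliminates the
  \<open>x\<close>-derivatives from the Poisson bracket of the leading forms.\<close>

lemma ypoly_wpart_wcomm:
  fixes P Q :: "'a::field_char_0 wel"
  assumes "l > 0" and "\<rho> \<noteq> 0" and "\<rho> + \<sigma> > 0"
    and fP: "finite (wsupp P)" and fQ: "finite (wsupp Q)" and hom: "homogeneous l \<rho> \<sigma> Q"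
  defines "A \<equiv> ypoly (lead l \<rho> \<sigma> P)" and "G \<equiv> ypoly Q"
  shows "ypoly (wpart l \<rho> \<sigma> (vval l \<rho> \<sigma> P + vval l \<rho> \<sigma> Q - of_int (\<rho> + \<sigma>)) (wcomm l P Q)) =
    smult (of_rat (vval l \<rho> \<sigma> Q / of_int \<rho>)) (pderiv A * G) -
    smult (of_rat (vval l \<rho> \<sigma> P / of_int \<rho>)) (A * pderiv G)"
proof -
  define W where "W = vval l \<rho> \<sigma> P + vval l \<rho> \<sigma> Q - of_int (\<rho> + \<sigma>)"
  define cP cQ :: 'a
    where "cP = of_rat (vval l \<rho> \<sigma> P / of_int \<rho>)" and "cQ = of_rat (vval l \<rho> \<sigma> Q / of_int \<rho>)"
  define S where "S = {e \<in> wmult_exps l P Q \<union> wmult_exps l Q P. wt l \<rho> \<sigma> e = W}"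
  have "monom 1 1 * ypoly (wpart l \<rho> \<sigma> W (wcomm l P Q)) = (\<Sum>e\<in>S. monom (wcomm l P Q e) (Suc (snd e)))"
    using fP fQ wsupp_wcomm_subset
    by (intro monom_1_1_mult_ypoly_wpart) (auto simp: S_def finite_wmult_exps)
  also have "\<dots> = (\<Sum>x\<in>wsupp (lead l \<rho> \<sigma> P). \<Sum>y\<in>wsupp Q.
       monom (P x * Q y * (of_nat (snd x) * of_int (fst y) / of_nat l -
                           of_nat (snd y) * of_int (fst x) / of_nat l)) (snd x + snd y))"
    unfolding S_def W_def by (rule sum_monom_wcomm_top_weight[OF assms(1,3) fP fQ hom])
  also have "\<dots> = (\<Sum>x\<in>wsupp (lead l \<rho> \<sigma> P). \<Sum>y\<in>wsupp Q.
       monom (lead l \<rho> \<sigma> P x * Q y * (cQ * of_nat (snd x) - cP * of_nat (snd y))) (snd x + snd y))"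
  proof (intro sum.cong refl arg_cong2[where f = monom])
    fix x y assume x: "x \<in> wsupp (lead l \<rho> \<sigma> P)" and y: "y \<in> wsupp Q"
    hence "x \<in> wsupp P" and wx: "wt l \<rho> \<sigma> x = vval l \<rho> \<sigma> P" by (simp_all add: wsupp_lead)
    hence "lead l \<rho> \<sigma> P x = P x" by (simp add: lead_def)
    with wt_cross_identity[OF assms(1,2) wx homogeneousD[OF hom y], where 'a = 'a] show "P x * Q y * (of_nat (snd x) * of_int (fst y) / of_nat l -
        of_nat (snd y) * of_int (fst x) / of_nat l) =
        lead l \<rho> \<sigma> P x * Q y * (cQ * of_nat (snd x) - cP * of_nat (snd y))"
      by (simp add: cP_def cQ_def)
  qed
  also have "\<dots> = monom 1 1 * (smult cQ (pderiv A * G) - smult cP (A * pderiv G))"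
    unfolding A_def G_def by (rule monom_1_1_mult_ypoly_bracket[symmetric])
  finally show ?thesis by (simp add: W_def cP_def cQ_def)
qed

lemma comm_rs_eq_leadD:
  fixes P F :: "'a::field_char_0 wel"
  assumes "l > 0" and "\<rho> + \<sigma> > 0" and fP: "finite (wsupp P)" and fF: "finite (wsupp F)"
    and "P \<noteq> (\<lambda>_. 0)" and cr: "comm_rs l \<rho> \<sigma> P F = lead l \<rho> \<sigma> P"
  shows "vval l \<rho> \<sigma> F = of_int (\<rho> + \<sigma>)"
    and "lead l \<rho> \<sigma> P = wpart l \<rho> \<sigma> (vval l \<rho> \<sigma> P) (wcomm l P F)"
proof -
  define C where "C = wcomm l P F"
  define W where "W = vval l \<rho> \<sigma> P + vval l \<rho> \<sigma> F - of_int (\<rho> + \<sigma>)"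
  obtain e1 where e1: "e1 \<in> wsupp P" "wt l \<rho> \<sigma> e1 = vval l \<rho> \<sigma> P"
    using vval_attained[OF fP \<open>P \<noteq> (\<lambda>_. 0)\<close>] .
  hence lead_e1: "lead l \<rho> \<sigma> P e1 \<noteq> 0" by (simp add: lead_def wsupp_def)
  have "comm_rs l \<rho> \<sigma> P F \<noteq> (\<lambda>_. 0)" using cr lead_e1 by metis
  hence nondeg: "\<not> (C = (\<lambda>_. 0) \<or> vval l \<rho> \<sigma> C < W)"
    by (auto simp: comm_rs_def C_def W_def)
  have lead_C: "lead l \<rho> \<sigma> C = lead l \<rho> \<sigma> P"
    using cr nondeg by (simp add: comm_rs_def C_def W_def)
  have "vval l \<rho> \<sigma> C \<le> W"
  proof -
    obtain e0 where e0: "e0 \<in> wsupp C" "wt l \<rho> \<sigma> e0 = vval l \<rho> \<sigma> C"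
      using vval_attained[OF finite_wsupp_wcomm[OF fP fF]] nondeg by (metis C_def)
    have "\<not> W < wt l \<rho> \<sigma> e0"
      using e0(1) wcomm_eq_0_above[OF fP fF assms(1,2), of e0] by (auto simp: C_def W_def wsupp_def)
    thus ?thesis using e0(2) by simp
  qed
  with nondeg have vC: "vval l \<rho> \<sigma> C = W" by simp
  have "e1 \<in> wsupp (lead l \<rho> \<sigma> C)" using lead_e1 lead_C by (simp add: wsupp_def)
  hence "wt l \<rho> \<sigma> e1 = vval l \<rho> \<sigma> C" by (simp add: wsupp_lead)
  hence vP: "vval l \<rho> \<sigma> P = W" using e1(2) vC by simp
  thus "vval l \<rho> \<sigma> F = of_int (\<rho> + \<sigma>)" by (simp add: W_def)
  show "lead l \<rho> \<sigma> P = wpart l \<rho> \<sigma> (vval l \<rho> \<sigma> P) (wcomm l P F)"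
    unfolding C_def[symmetric] using lead_C lead_eq_wpart_vval[of l \<rho> \<sigma> C] by (simp add: vC vP)
qed

lemma ypoly_lead_eq_bracket:
  fixes P F :: "'a::field_char_0 wel"
  assumes "l > 0" and "\<rho> \<noteq> 0" and "\<rho> + \<sigma> > 0"
    and fP: "finite (wsupp P)" and fF: "finite (wsupp F)" and "P \<noteq> (\<lambda>_. 0)"
    and hom: "homogeneous l \<rho> \<sigma> F" and cr: "comm_rs l \<rho> \<sigma> P F = lead l \<rho> \<sigma> P"
  defines "A \<equiv> ypoly (lead l \<rho> \<sigma> P)" and "G \<equiv> ypoly F"
  shows "A = smult (of_int (\<rho> + \<sigma>) / of_int \<rho>) (pderiv A * G) -
    smult (of_rat (vval l \<rho> \<sigma> P / of_int \<rho>)) (A * pderiv G)"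
proof -
  note vF = comm_rs_eq_leadD(1)[OF assms(1,3) fP fF assms(6) cr]
  have "A = ypoly (wpart l \<rho> \<sigma> (vval l \<rho> \<sigma> P + vval l \<rho> \<sigma> F - of_int (\<rho> + \<sigma>)) (wcomm l P F))"
    using comm_rs_eq_leadD(2)[OF assms(1,3) fP fF assms(6) cr] by (simp add: A_def vF)
  also have "\<dots> = smult (of_rat (vval l \<rho> \<sigma> F / of_int \<rho>)) (pderiv A * G) -
      smult (of_rat (vval l \<rho> \<sigma> P / of_int \<rho>)) (A * pderiv G)"
    unfolding A_def G_def by (rule ypoly_wpart_wcomm[OF assms(1-3) fP fF hom])
  finally show ?thesis by (simp add: vF of_rat_divide of_rat_add)
qed

lemma ypoly_lead_eq_monom_mult_fpol:
  assumes "finite (wsupp P)"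
  shows "ypoly (lead l \<rho> \<sigma> P) = monom 1 (Min (snd ` wsupp (lead l \<rho> \<sigma> P))) * fpol l \<rho> \<sigma> P"
  unfolding ypoly_def fpol_def Let_def sum_distrib_left
proof (rule sum.cong[OF refl])
  fix e assume e: "e \<in> wsupp (lead l \<rho> \<sigma> P)"
  have "Min (snd ` wsupp (lead l \<rho> \<sigma> P)) \<le> snd e"
    using assms e by (intro Min_le) (auto simp: wsupp_lead)
  thus "monom (lead l \<rho> \<sigma> P e) (snd e) =
      monom 1 (Min (snd ` wsupp (lead l \<rho> \<sigma> P))) *
      monom (lead l \<rho> \<sigma> P e) (snd e - Min (snd ` wsupp (lead l \<rho> \<sigma> P)))"
    by (simp add: mult_monom)
qed

lemma inj_on_snd_wsupp_lead:
  assumes "\<rho> \<noteq> 0" and "l > 0"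
  shows "inj_on snd (wsupp (lead l \<rho> \<sigma> P))"
proof
  fix e e' assume "e \<in> wsupp (lead l \<rho> \<sigma> P)" "e' \<in> wsupp (lead l \<rho> \<sigma> P)" "snd e = snd e'"
  hence "wt l \<rho> \<sigma> e = wt l \<rho> \<sigma> e'" by (simp add: wsupp_lead)
  hence "of_int \<rho> * (of_int (fst e) / of_nat l) = (of_int \<rho> * (of_int (fst e') / of_nat l) :: rat)"
    using \<open>snd e = snd e'\<close> by (simp add: wt_def)
  hence "fst e = fst e'" using assms by (simp add: field_simps)
  thus "e = e'" using \<open>snd e = snd e'\<close> by (simp add: prod_eq_iff)
qed

lemma coeff_0_fpol_neq_0:
  assumes "finite (wsupp P)" and "P \<noteq> (\<lambda>_. 0)" and "\<rho> \<noteq> 0" and "l > 0"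
  shows "coeff (fpol l \<rho> \<sigma> P) 0 \<noteq> 0"
proof -
  define L where "L = lead l \<rho> \<sigma> P"
  define s where "s = Min (snd ` wsupp L)"
  have fL: "finite (wsupp L)" using assms(1) by (simp add: L_def wsupp_lead)
  obtain e1 where "e1 \<in> wsupp P" and "wt l \<rho> \<sigma> e1 = vval l \<rho> \<sigma> P"
    using vval_attained[OF assms(1,2)] .
  hence "e1 \<in> wsupp L" by (simp add: L_def wsupp_lead)
  hence "wsupp L \<noteq> {}" by blast
  hence "s \<in> snd ` wsupp L" unfolding s_def using fL by (intro Min_in) auto
  then obtain e0 where e0: "e0 \<in> wsupp L" "snd e0 = s" by blast
  have "{e \<in> wsupp L. snd e - s = 0} = {e0}"
  proof (intro equalityI subsetI)
    fix e assume e: "e \<in> {e \<in> wsupp L. snd e - s = 0}"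
    hence "s \<le> snd e" using fL by (auto simp: s_def intro: Min_le)
    hence "snd e = snd e0" using e e0 by simp
    thus "e \<in> {e0}"
      using inj_on_snd_wsupp_lead[OF assms(3,4)] e e0(1) by (auto simp: L_def inj_on_def)
  qed (use e0 in auto)
  hence "coeff (fpol l \<rho> \<sigma> P) 0 = L e0"
    unfolding fpol_def Let_def coeff_sum coeff_monom L_def[symmetric] s_def[symmetric]
    by (simp add: sum.inter_filter[OF fL, symmetric])
  thus ?thesis using e0 by (simp add: wsupp_def)
qed

theorem proposition3p6:
  fixes l :: nat and \<rho> \<sigma> :: int and P F :: "'a::field_char_0 wel"
  assumes "l > 0"
    and "(\<rho>, \<sigma>) \<in> Vdir" and "\<sigma> \<le> 0"
    and "welem P" and "welem F"
    and "P \<noteq> (\<lambda>_. 0)" and "F \<noteq> (\<lambda>_. 0)"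
    and "homogeneous l \<rho> \<sigma> F"
    and "comm_rs l \<rho> \<sigma> P F = lead l \<rho> \<sigma> P"
  shows "separable (fpol l \<rho> \<sigma> F) \<and>
         (\<forall>g. irreducible g \<and> g dvd fpol l \<rho> \<sigma> P \<longrightarrow> g dvd fpol l \<rho> \<sigma> F)"
proof -
  have "\<rho> + \<sigma> > 0" using assms(2) by (simp add: Vdir_def)
  hence "\<rho> > 0" using assms(3) by simp
  hence "\<rho> \<noteq> 0" by simp
  have fP: "finite (wsupp P)" and fF: "finite (wsupp F)"
    using assms(4,5) by (simp_all add: welem_def)
  have "ypoly (lead l \<rho> \<sigma> F) = ypoly F" using assms(8) by (simp add: homogeneous_def)
  hence "ypoly F = monom 1 (Min (snd ` wsupp (lead l \<rho> \<sigma> F))) * fpol l \<rho> \<sigma> F"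
    using ypoly_lead_eq_monom_mult_fpol[OF fF] by simp
  moreover note ypoly_lead_eq_monom_mult_fpol[OF fP, of l \<rho> \<sigma>]
  moreover have "ypoly (lead l \<rho> \<sigma> P) =
      smult (of_int (\<rho> + \<sigma>) / of_int \<rho>) (pderiv (ypoly (lead l \<rho> \<sigma> P)) * ypoly F) -
      smult (of_rat (vval l \<rho> \<sigma> P / of_int \<rho>)) (ypoly (lead l \<rho> \<sigma> P) * pderiv (ypoly F))"
    by (rule ypoly_lead_eq_bracket[OF \<open>l > 0\<close> \<open>\<rho> \<noteq> 0\<close> \<open>\<rho> + \<sigma> > 0\<close> fP fF assms(6,8,9)])
  moreover have "(of_int (\<rho> + \<sigma>) / of_int \<rho> :: 'a) \<noteq> 0"
    unfolding divide_eq_0_iff of_int_eq_0_iff using \<open>\<rho> > 0\<close> \<open>\<rho> + \<sigma> > 0\<close> by simp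
  moreover have "poly (fpol l \<rho> \<sigma> P) 0 \<noteq> 0" and "fpol l \<rho> \<sigma> F \<noteq> 0"
    using coeff_0_fpol_neq_0[where \<sigma> = \<sigma>, OF fP assms(6) \<open>\<rho> \<noteq> 0\<close> \<open>l > 0\<close>]
      coeff_0_fpol_neq_0[where \<sigma> = \<sigma>, OF fF assms(7) \<open>\<rho> \<noteq> 0\<close> \<open>l > 0\<close>]
    by (auto simp: poly_0_coeff_0)
  ultimately show ?thesis using separable_and_factors_dvd_if_bracket_eq by metis
qed

end
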